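(* For any $u, v \in \mathfrak{H}$, in $\mathfrak H[[X,Y]]$ one has \begin{align*} &ug_{1}\frac{1}{1-aX} \,\mathrm{sh}_{\hbar}\, vg_{1}\frac{1}{1-aY}\\ &=\Bigl\{(1+\hbar X)\Bigl(ug_{1}\frac{1}{1-aX}\,\mathrm{sh}_{\hbar}\,v\Bigr)+(1+\hbar Y)\Bigl(u\,\mathrm{sh}_{\hbar}\,vg_{1}\frac{1}{1-aY}\Bigr)+(u\,\mathrm{sh}_{\hbar}\,v)(e_{1}-g_{1}) \Bigr\}\,g_{1}\frac{1}{1-a(X+Y+\hbar XY)}. \end{align*}
   Context: Let $\mathcal{C}=\mathbb{Q}[\hbar]$ ($\hbar$ formal), $\mathfrak{H}=\mathcal{C}\langle a,b\rangle$ the non-commutative polynomial ring in $a,b$. Put $g_1=ba$ and $e_1=b(a+\hbar)$, so $e_1-g_1=\hbar b$. The shuffle product $\mathrm{sh}_\hbar$ on $\mathfrak H$ (written infix) is the $\mathcal C$-bilinear product determined by $w\,\mathrm{sh}_\hbar\,1=1\,\mathrm{sh}_\hbar\,w=w$, $wa\,\mathrm{sh}_\hbar\,w'a=(wa\,\mathrm{sh}_\hbar\,w'+w\,\mathrm{sh}_\hbar\,w'a+\hbar(w\,\mathrm{sh}_\hbar\,w'))a$ and $wb\,\mathrm{sh}_\hbar\,w'=w\,\mathrm{sh}_\hbar\,w'b=(w\,\mathrm{sh}_\hbar\,w')b$ for $w,w'\in\mathfrak H$. It is extended to formal power series coefficientwise ($\mathcal C[[X,Y]]$-bilinearly), and $\frac{1}{1-aZ}=\sum_{n\ge0}a^nZ^n$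 for a formal power series $Z$ without constant term (the formal variables $X,Y$ commute with everything). *)

theory Defs
  imports "HOL-Computational_Algebra.Polynomial"
begin

type_synonym coef = "rat poly"

definition hbar :: coef where "hbar = [:0, 1:]"

datatype letter = La | Lb

text \<open>Elements of H = C<a,b> are finitely supported coefficient functions on words.
  We use the ambient type of all coefficient functions and impose finite support
  (predicate nc_fin) where needed.\<close>
type_synonym nc = "letter list \<Rightarrow> coef"

definition nc_supp :: "nc \<Rightarrow> letter list set" where
  "nc_supp f = {w. f w \<noteq> 0}"

definition nc_fin :: "nc \<Rightarrow> bool" where
  "nc_fin f \<longleftrightarrow> finite (nc_supp f)"

definition nc_zero :: nc where "nc_zero = (\<lambda>w. 0)"

definition nc_add :: "nc \<Rightarrow> nc \<Rightarrow> nc" where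
  "nc_add f g = (\<lambda>w. f w + g w)"

definition nc_diff :: "nc \<Rightarrow> nc \<Rightarrow> nc" where
  "nc_diff f g = (\<lambda>w. f w - g w)"

definition nc_smul :: "coef \<Rightarrow> nc \<Rightarrow> nc" where
  "nc_smul c f = (\<lambda>w. c * f w)"

definition word :: "letter list \<Rightarrow> nc" where
  "word u = (\<lambda>w. if w = u then 1 else 0)"

definition nc_mult :: "nc \<Rightarrow> nc \<Rightarrow> nc" where
  "nc_mult f g = (\<lambda>w. \<Sum>k\<le>length w. f (take k w) * g (drop k w))"

definition g1 :: nc where "g1 = word [Lb, La]"

definition e1 :: nc where "e1 = nc_add (word [Lb, La]) (nc_smul hbar (word [Lb]))"

text \<open>Shuffle product of two words. The recursion in the paper peels letters off the
  right end; shr works on the reversed words, so the head of a list is the last letter.\<close>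
fun shr :: "letter list \<Rightarrow> letter list \<Rightarrow> nc" where
  "shr [] v = word (rev v)"
| "shr u [] = word (rev u)"
| "shr (Lb # u) v = nc_mult (shr u v) (word [Lb])"
| "shr u (Lb # v) = nc_mult (shr u v) (word [Lb])"
| "shr (La # u) (La # v) =
     nc_mult (nc_add (nc_add (shr (La # u) v) (shr u (La # v))) (nc_smul hbar (shr u v)))
             (word [La])"

definition shw :: "letter list \<Rightarrow> letter list \<Rightarrow> nc" where
  "shw u v = shr (rev u) (rev v)"

definition sh :: "nc \<Rightarrow> nc \<Rightarrow> nc" where
  "sh f g = (\<lambda>w. \<Sum>u\<in>nc_supp f. \<Sum>v\<in>nc_supp g. f u * g v * shw u v w)"

text \<open>H[[X,Y]]: a series F has coefficient F i j at X^i Y^j.  Scalar series C[[X,Y]].\<close>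
type_synonym ser = "nat \<Rightarrow> nat \<Rightarrow> nc"
type_synonym sc = "nat \<Rightarrow> nat \<Rightarrow> coef"

definition ser_const :: "nc \<Rightarrow> ser" where
  "ser_const f = (\<lambda>i j. if i = 0 \<and> j = 0 then f else nc_zero)"

definition ser_add :: "ser \<Rightarrow> ser \<Rightarrow> ser" where
  "ser_add F G = (\<lambda>i j. nc_add (F i j) (G i j))"

definition ser_mult :: "ser \<Rightarrow> ser \<Rightarrow> ser" where
  "ser_mult F G = (\<lambda>i j. \<lambda>w. \<Sum>i1\<le>i. \<Sum>j1\<le>j. nc_mult (F i1 j1) (G (i - i1) (j - j1)) w)"

definition ser_sh :: "ser \<Rightarrow> ser \<Rightarrow> ser" where
  "ser_sh F G = (\<lambda>i j. \<lambda>w. \<Sum>i1\<le>i. \<Sum>j1\<le>j. sh (F i1 j1) (G (i - i1) (j - j1)) w)"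

definition ser_smul :: "sc \<Rightarrow> ser \<Rightarrow> ser" where
  "ser_smul c F = (\<lambda>i j. \<lambda>w. \<Sum>i1\<le>i. \<Sum>j1\<le>j. c i1 j1 * F (i - i1) (j - j1) w)"

definition sc_mult :: "sc \<Rightarrow> sc \<Rightarrow> sc" where
  "sc_mult c d = (\<lambda>i j. \<Sum>i1\<le>i. \<Sum>j1\<le>j. c i1 j1 * d (i - i1) (j - j1))"

definition sc_one :: sc where "sc_one = (\<lambda>i j. if i = 0 \<and> j = 0 then 1 else 0)"

fun sc_pow :: "sc \<Rightarrow> nat \<Rightarrow> sc" where
  "sc_pow c 0 = sc_one"
| "sc_pow c (Suc n) = sc_mult c (sc_pow c n)"

definition scX :: sc where "scX = (\<lambda>i j. if i = 1 \<and> j = 0 then 1 else 0)"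
definition scY :: sc where "scY = (\<lambda>i j. if i = 0 \<and> j = 1 then 1 else 0)"

definition sc_1hX :: sc where
  "sc_1hX = (\<lambda>i j. if i = 0 \<and> j = 0 then 1 else if i = 1 \<and> j = 0 then hbar else 0)"
definition sc_1hY :: sc where
  "sc_1hY = (\<lambda>i j. if i = 0 \<and> j = 0 then 1 else if i = 0 \<and> j = 1 then hbar else 0)"
definition scXYh :: sc where
  "scXYh = (\<lambda>i j. if (i = 1 \<and> j = 0) \<or> (i = 0 \<and> j = 1) then 1
                  else if i = 1 \<and> j = 1 then hbar else 0)"

text \<open>1/(1 - aZ) = sum_n a^n Z^n for Z without constant term.  The coefficient of
  X^i Y^j only receives contributions from n \<le> i + j (Z^n has order \<ge> n).\<close>
definition geom :: "sc \<Rightarrow> ser" where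
  "geom Z = (\<lambda>i j. \<lambda>w. \<Sum>n\<le>i+j. sc_pow Z n i j * word (replicate n La) w)"

end

theory Submission
  imports Defs
begin

text \<open>Let \<open>L\<^sub>i\<^sub>j = u b a\<^sup>i\<^sup>+\<^sup>1 sh v b a\<^sup>j\<^sup>+\<^sup>1\<close> be the coefficient of \<open>X\<^sup>i Y\<^sup>j\<close> on the
  left-hand side, \<open>C\<close> the series in braces and \<open>Z = X + Y + \<hbar>XY\<close>. The shuffle rule for two
  trailing letters \<open>a\<close> gives \<open>L = C g\<^sub>1 + (Z L) a\<close>: the terms of \<open>Z L\<close> collect all
  contributions except those in which one exponent of \<open>a\<close> has been used up, and these
  boundary terms assemble into \<open>C b\<close>. The right-hand side \<open>C g\<^sub>1 /(1 - aZ)\<close> satisfies the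
  same recursion because \<open>1/(1 - aZ) = 1 + (Z/(1 - aZ)) a\<close>, and since \<open>Z\<close> has no constant
  term the recursion determines a series by induction on the total degree.\<close>

lemma nc_zero_apply [simp]: "nc_zero w = 0"
  by (simp add: nc_zero_def)

lemma word_apply: "word u w = (if w = u then 1 else 0)"
  by (simp add: word_def)

lemma nc_mult_letter_Nil [simp]: "nc_mult F (word [x]) [] = 0"
  by (simp add: nc_mult_def word_def)

lemma nc_mult_letter_snoc [simp]:
  "nc_mult F (word [x]) (p @ [y]) = (if y = x then F p else 0)"
proof -
  have "nc_mult F (word [x]) (p @ [y])
      = (\<Sum>k\<le>length p. F (take k (p @ [y])) * word [x] (drop k (p @ [y]))) + F (p @ [y]) * word [x] []"
    by (simp add: nc_mult_def)
  also have "(\<Sum>k\<le>length p. F (take k (p @ [y])) * word [x] (drop k (p @ [y])))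
      = (\<Sum>k\<le>length p. if k = length p then (if y = x then F p else 0) else 0)"
    by (rule sum.cong) (auto simp: word_def)
  finally show ?thesis
    by (simp add: word_def)
qed

lemma nc_mult_word_Nil [simp]: "nc_mult F (word []) = F"
proof
  fix w
  have "nc_mult F (word []) w = (\<Sum>k\<le>length w. if k = length w then F w else 0)"
    unfolding nc_mult_def by (rule sum.cong) (auto simp: word_def)
  then show "nc_mult F (word []) w = F w"
    by simp
qed

lemma nc_mult_word_letter: "nc_mult (word s) (word [x]) = word (s @ [x])"
proof
  fix w
  show "nc_mult (word s) (word [x]) w = word (s @ [x]) w"
    by (cases w rule: rev_cases) (auto simp: word_apply)
qed

lemma nc_mult_assoc_letter:
  "nc_mult F (nc_mult G (word [x])) = nc_mult (nc_mult F G) (word [x])"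
proof
  fix w
  show "nc_mult F (nc_mult G (word [x])) w = nc_mult (nc_mult F G) (word [x]) w"
  proof (cases w rule: rev_cases)
    case Nil
    then show ?thesis
      by (simp add: nc_mult_def)
  next
    case (snoc p y)
    have "nc_mult F (nc_mult G (word [x])) w
        = (\<Sum>k\<le>length p. F (take k (p @ [y])) * nc_mult G (word [x]) (drop k (p @ [y])))"
      by (simp add: nc_mult_def[of F] snoc)
    also have "\<dots> = (\<Sum>k\<le>length p. if y = x then F (take k p) * G (drop k p) else 0)"
      by (rule sum.cong) auto
    finally show ?thesis
      by (simp add: snoc nc_mult_def[of F G] if_distrib[of "\<lambda>c. c * _"] cong: if_cong)
  qed
qed

lemma nc_mult_word_append:
  "nc_mult (nc_mult F (word s)) (word t) = nc_mult F (word (s @ t))"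
proof (induction t rule: rev_induct)
  case Nil
  then show ?case
    by simp
next
  case (snoc x t)
  then show ?case
    by (metis append_assoc nc_mult_assoc_letter nc_mult_word_letter)
qed

lemma nc_mult_add_left: "nc_mult (nc_add F G) H = nc_add (nc_mult F H) (nc_mult G H)"
  by (auto simp: nc_mult_def nc_add_def algebra_simps sum.distrib)

lemma nc_mult_add_right: "nc_mult H (nc_add F G) = nc_add (nc_mult H F) (nc_mult H G)"
  by (auto simp: nc_mult_def nc_add_def algebra_simps sum.distrib)

lemma nc_mult_smul_left: "nc_mult (nc_smul c F) H = nc_smul c (nc_mult F H)"
  by (auto simp: nc_mult_def nc_smul_def algebra_simps sum_distrib_left)

lemma nc_mult_smul_right: "nc_mult H (nc_smul c F) = nc_smul c (nc_mult H F)"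
  by (auto simp: nc_mult_def nc_smul_def algebra_simps sum_distrib_left)

lemma nc_mult_zero_left [simp]: "nc_mult nc_zero H = nc_zero"
  by (auto simp: nc_mult_def nc_zero_def)

lemma nc_mult_zero_right [simp]: "nc_mult H nc_zero = nc_zero"
  by (auto simp: nc_mult_def nc_zero_def)

lemma nc_diff_e1_g1: "nc_diff e1 g1 = nc_smul hbar (word [Lb])"
  by (auto simp: nc_diff_def e1_def g1_def nc_add_def nc_smul_def)

section \<open>The shuffle product\<close>

lemma shr_Nil_right [simp]: "shr u [] = word (rev u)"
  by (cases u) auto

lemma shr_Lb_right: "shr u (Lb # v) = nc_mult (shr u v) (word [Lb])"
proof (induction u arbitrary: v)
  case Nil
  then show ?case
    by (simp add: nc_mult_word_letter)
next
  case (Cons y u)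
  then show ?case
    by (cases y; cases v) (simp_all add: nc_mult_word_letter)
qed

lemma shw_snoc_Lb_right: "shw u (v @ [Lb]) = nc_mult (shw u v) (word [Lb])"
  by (simp add: shw_def shr_Lb_right)

lemma shw_snoc_Lb_left: "shw (u @ [Lb]) v = nc_mult (shw u v) (word [Lb])"
  by (cases "rev v") (simp_all add: shw_def nc_mult_word_letter)

lemma shw_snoc_La_La:
  "shw (u @ [La]) (v @ [La]) =
     nc_mult (nc_add (nc_add (shw (u @ [La]) v) (shw u (v @ [La]))) (nc_smul hbar (shw u v)))
       (word [La])"
  by (simp add: shw_def)

text \<open>Right multiplication by a letter maps supports bijectively, so the reindexing lemmas
  below need no finiteness of supports.\<close>

definition bilin_ext :: "(letter list \<Rightarrow> letter list \<Rightarrow> nc) \<Rightarrow> nc \<Rightarrow> nc \<Rightarrow> nc" where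
  "bilin_ext K f g = (\<lambda>w. \<Sum>u\<in>nc_supp f. \<Sum>v\<in>nc_supp g. f u * g v * K u v w)"

lemma sh_eq_bilin_ext: "sh = bilin_ext shw"
  by (auto simp: sh_def bilin_ext_def fun_eq_iff)

lemma nc_supp_mult_letter: "nc_supp (nc_mult F (word [x])) = (\<lambda>u. u @ [x]) ` nc_supp F"
proof (rule set_eqI)
  fix w
  show "w \<in> nc_supp (nc_mult F (word [x])) \<longleftrightarrow> w \<in> (\<lambda>u. u @ [x]) ` nc_supp F"
    by (cases w rule: rev_cases) (auto simp: nc_supp_def)
qed

lemma inj_on_snoc: "inj_on (\<lambda>u. u @ [x]) A"
  by (auto simp: inj_on_def)

lemma bilin_ext_mult_letter_left:
  "bilin_ext K (nc_mult f (word [x])) g = bilin_ext (\<lambda>u v. K (u @ [x]) v) f g"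
  unfolding bilin_ext_def nc_supp_mult_letter by (simp add: sum.reindex[OF inj_on_snoc])

lemma bilin_ext_mult_letter_right:
  "bilin_ext K f (nc_mult g (word [x])) = bilin_ext (\<lambda>u v. K u (v @ [x])) f g"
  unfolding bilin_ext_def nc_supp_mult_letter by (simp add: sum.reindex[OF inj_on_snoc])

lemma bilin_ext_kernel_add:
  "bilin_ext (\<lambda>u v. nc_add (K1 u v) (K2 u v)) f g = nc_add (bilin_ext K1 f g) (bilin_ext K2 f g)"
  by (auto simp: bilin_ext_def nc_add_def algebra_simps sum.distrib)

lemma bilin_ext_kernel_smul:
  "bilin_ext (\<lambda>u v. nc_smul c (K u v)) f g = nc_smul c (bilin_ext K f g)"
  by (auto simp: bilin_ext_def nc_smul_def algebra_simps sum_distrib_left)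

lemma bilin_ext_kernel_mult_letter:
  "bilin_ext (\<lambda>u v. nc_mult (K u v) (word [x])) f g = nc_mult (bilin_ext K f g) (word [x])"
proof
  fix w
  show "bilin_ext (\<lambda>u v. nc_mult (K u v) (word [x])) f g w = nc_mult (bilin_ext K f g) (word [x]) w"
    by (cases w rule: rev_cases) (auto simp: bilin_ext_def)
qed

lemma sh_mult_Lb_right: "sh f (nc_mult g (word [Lb])) = nc_mult (sh f g) (word [Lb])"
  by (simp add: sh_eq_bilin_ext bilin_ext_mult_letter_right shw_snoc_Lb_right
      bilin_ext_kernel_mult_letter)

lemma sh_mult_Lb_left: "sh (nc_mult f (word [Lb])) g = nc_mult (sh f g) (word [Lb])"
  by (simp add: sh_eq_bilin_ext bilin_ext_mult_letter_left shw_snoc_Lb_left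
      bilin_ext_kernel_mult_letter)

lemma sh_mult_La_La:
  "sh (nc_mult f (word [La])) (nc_mult g (word [La])) =
     nc_mult (nc_add (nc_add (sh (nc_mult f (word [La])) g) (sh f (nc_mult g (word [La]))))
       (nc_smul hbar (sh f g))) (word [La])"
  by (simp add: sh_eq_bilin_ext bilin_ext_mult_letter_left bilin_ext_mult_letter_right
      shw_snoc_La_La bilin_ext_kernel_mult_letter bilin_ext_kernel_add bilin_ext_kernel_smul)

lemma sh_zero_left [simp]: "sh nc_zero g = nc_zero"
  by (auto simp: sh_def nc_supp_def)

lemma sh_zero_right [simp]: "sh f nc_zero = nc_zero"
  by (auto simp: sh_def nc_supp_def)

lemma sum_atMost_single:
  fixes G :: "nat \<Rightarrow> 'a::comm_monoid_add"
  assumes "a \<le> i" "\<And>k. k \<le> i \<Longrightarrow> k \<noteq> a \<Longrightarrow> G k = 0"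
  shows "(\<Sum>k\<le>i. G k) = G a"
proof -
  have "(\<Sum>k\<le>i. G k) = (\<Sum>k\<le>i. if k = a then G k else 0)"
    by (rule sum.cong) (use assms in auto)
  also have "\<dots> = G a"
    using assms(1) by (simp add: sum.delta)
  finally show ?thesis .
qed

lemma sum_atMost_two_terms:
  fixes G :: "nat \<Rightarrow> 'a::comm_monoid_add"
  assumes "\<And>k. k \<ge> 2 \<Longrightarrow> G k = 0"
  shows "(\<Sum>k\<le>i. G k) = G 0 + (if 1 \<le> i then G 1 else 0)"
proof (induction i)
  case 0
  then show ?case
    by simp
next
  case (Suc i)
  then show ?case
    using assms[of "Suc i"] by (cases i) auto
qed

definition shift_X :: "ser \<Rightarrow> ser" where
  "shift_X F = (\<lambda>i j. if i = 0 then nc_zero else F (i - 1) j)"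

definition shift_Y :: "ser \<Rightarrow> ser" where
  "shift_Y F = (\<lambda>i j. if j = 0 then nc_zero else F i (j - 1))"

lemma ser_mult_const_left: "ser_mult (ser_const f) G i j = nc_mult f (G i j)"
proof
  fix w
  have "\<And>i1. (\<Sum>j1\<le>j. nc_mult (ser_const f i1 j1) (G (i - i1) (j - j1)) w)
        = nc_mult (ser_const f i1 0) (G (i - i1) j) w"
    by (subst sum_atMost_single[of 0]) (auto simp: ser_const_def)
  then have "ser_mult (ser_const f) G i j w = (\<Sum>i1\<le>i. nc_mult (ser_const f i1 0) (G (i - i1) j) w)"
    by (simp add: ser_mult_def)
  also have "\<dots> = nc_mult f (G i j) w"
    by (subst sum_atMost_single[of 0]) (auto simp: ser_const_def)
  finally show "ser_mult (ser_const f) G i j w = nc_mult f (G i j) w" .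
qed

lemma ser_mult_const_right: "ser_mult C (ser_const g) i j = nc_mult (C i j) g"
proof
  fix w
  have "\<And>i1. i1 \<le> i \<Longrightarrow> (\<Sum>j1\<le>j. nc_mult (C i1 j1) (ser_const g (i - i1) (j - j1)) w)
        = nc_mult (C i1 j) (ser_const g (i - i1) 0) w"
    by (subst sum_atMost_single[of j]) (auto simp: ser_const_def)
  then have "ser_mult C (ser_const g) i j w = (\<Sum>i1\<le>i. nc_mult (C i1 j) (ser_const g (i - i1) 0) w)"
    by (simp add: ser_mult_def)
  also have "\<dots> = nc_mult (C i j) g w"
    by (subst sum_atMost_single[of i]) (auto simp: ser_const_def)
  finally show "ser_mult C (ser_const g) i j w = nc_mult (C i j) g w" .
qed

lemma ser_sh_const_left: "ser_sh (ser_const f) G i j = sh f (G i j)"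
proof
  fix w
  have "\<And>i1. (\<Sum>j1\<le>j. sh (ser_const f i1 j1) (G (i - i1) (j - j1)) w)
        = sh (ser_const f i1 0) (G (i - i1) j) w"
    by (subst sum_atMost_single[of 0]) (auto simp: ser_const_def)
  then have "ser_sh (ser_const f) G i j w = (\<Sum>i1\<le>i. sh (ser_const f i1 0) (G (i - i1) j) w)"
    by (simp add: ser_sh_def)
  also have "\<dots> = sh f (G i j) w"
    by (subst sum_atMost_single[of 0]) (auto simp: ser_const_def)
  finally show "ser_sh (ser_const f) G i j w = sh f (G i j) w" .
qed

lemma ser_sh_const_right: "ser_sh F (ser_const g) i j = sh (F i j) g"
proof
  fix w
  have "\<And>i1. i1 \<le> i \<Longrightarrow> (\<Sum>j1\<le>j. sh (F i1 j1) (ser_const g (i - i1) (j - j1)) w)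
        = sh (F i1 j) (ser_const g (i - i1) 0) w"
    by (subst sum_atMost_single[of j]) (auto simp: ser_const_def)
  then have "ser_sh F (ser_const g) i j w = (\<Sum>i1\<le>i. sh (F i1 j) (ser_const g (i - i1) 0) w)"
    by (simp add: ser_sh_def)
  also have "\<dots> = sh (F i j) g w"
    by (subst sum_atMost_single[of i]) (auto simp: ser_const_def)
  finally show "ser_sh F (ser_const g) i j w = sh (F i j) g w" .
qed

lemma ser_sh_X_Y_separated:
  "ser_sh (\<lambda>i j. if j = 0 then F i else nc_zero) (\<lambda>i j. if i = 0 then G j else nc_zero) i j
     = sh (F i) (G j)"
proof
  fix w
  have "\<And>i1. i1 \<le> i \<Longrightarrow>
        (\<Sum>j1\<le>j. sh (if j1 = 0 then F i1 else nc_zero) (if i - i1 = 0 then G (j - j1) else nc_zero) w)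
        = sh (F i1) (if i - i1 = 0 then G j else nc_zero) w"
    by (subst sum_atMost_single[of 0]) auto
  then have "ser_sh (\<lambda>i j. if j = 0 then F i else nc_zero) (\<lambda>i j. if i = 0 then G j else nc_zero) i j w
     = (\<Sum>i1\<le>i. sh (F i1) (if i - i1 = 0 then G j else nc_zero) w)"
    by (simp add: ser_sh_def)
  also have "\<dots> = sh (F i) (G j) w"
    by (subst sum_atMost_single[of i]) auto
  finally show "ser_sh (\<lambda>i j. if j = 0 then F i else nc_zero) (\<lambda>i j. if i = 0 then G j else nc_zero) i j w
     = sh (F i) (G j) w" .
qed

lemma ser_smul_sc_1hX: "ser_smul sc_1hX F i j = nc_add (F i j) (nc_smul hbar (shift_X F i j))"
proof
  fix w
  have "\<And>i1. (\<Sum>j1\<le>j. sc_1hX i1 j1 * F (i - i1) (j - j1) w) = sc_1hX i1 0 * F (i - i1) j w"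
    by (subst sum_atMost_single[of 0]) (auto simp: sc_1hX_def)
  then have "ser_smul sc_1hX F i j w = (\<Sum>i1\<le>i. sc_1hX i1 0 * F (i - i1) j w)"
    by (simp add: ser_smul_def)
  also have "\<dots> = nc_add (F i j) (nc_smul hbar (shift_X F i j)) w"
    by (subst sum_atMost_two_terms) (auto simp: sc_1hX_def nc_add_def nc_smul_def shift_X_def)
  finally show "ser_smul sc_1hX F i j w = nc_add (F i j) (nc_smul hbar (shift_X F i j)) w" .
qed

lemma ser_smul_sc_1hY: "ser_smul sc_1hY F i j = nc_add (F i j) (nc_smul hbar (shift_Y F i j))"
proof
  fix w
  have "ser_smul sc_1hY F i j w = (\<Sum>j1\<le>j. sc_1hY 0 j1 * F i (j - j1) w)"
    unfolding ser_smul_def by (subst sum_atMost_single[of 0]) (auto simp: sc_1hY_def)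
  also have "\<dots> = nc_add (F i j) (nc_smul hbar (shift_Y F i j)) w"
    by (subst sum_atMost_two_terms) (auto simp: sc_1hY_def nc_add_def nc_smul_def shift_Y_def)
  finally show "ser_smul sc_1hY F i j w = nc_add (F i j) (nc_smul hbar (shift_Y F i j)) w" .
qed

lemma ser_smul_scXYh:
  "ser_smul scXYh F i j =
     nc_add (nc_add (shift_X F i j) (shift_Y F i j)) (nc_smul hbar (shift_X (shift_Y F) i j))"
proof
  fix w
  have "\<And>i1. (\<Sum>j1\<le>j. scXYh i1 j1 * F (i - i1) (j - j1) w) =
      scXYh i1 0 * F (i - i1) j w + (if 1 \<le> j then scXYh i1 1 * F (i - i1) (j - 1) w else 0)"
    by (subst sum_atMost_two_terms) (auto simp: scXYh_def)
  then have "ser_smul scXYh F i j w = (\<Sum>i1\<le>i. scXYh i1 0 * F (i - i1) j w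
      + (if 1 \<le> j then scXYh i1 1 * F (i - i1) (j - 1) w else 0))"
    by (simp add: ser_smul_def)
  also have "\<dots> = nc_add (nc_add (shift_X F i j) (shift_Y F i j)) (nc_smul hbar (shift_X (shift_Y F) i j)) w"
    by (subst sum_atMost_two_terms)
      (auto simp: scXYh_def shift_X_def shift_Y_def nc_add_def nc_smul_def nc_zero_def)
  finally show "ser_smul scXYh F i j w =
      nc_add (nc_add (shift_X F i j) (shift_Y F i j)) (nc_smul hbar (shift_X (shift_Y F) i j)) w" .
qed

lemma sc_mult_scX: "sc_mult scX d i j = (if i = 0 then 0 else d (i - 1) j)"
proof -
  have "sc_mult scX d i j = (\<Sum>i1\<le>i. scX i1 0 * d (i - i1) j)"
    unfolding sc_mult_def by (subst sum_atMost_single[of 0]) (auto simp: scX_def)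
  also have "\<dots> = (if i = 0 then 0 else d (i - 1) j)"
    by (subst sum_atMost_two_terms) (auto simp: scX_def)
  finally show ?thesis .
qed

lemma sc_mult_scY: "sc_mult scY d i j = (if j = 0 then 0 else d i (j - 1))"
proof -
  have "sc_mult scY d i j = (\<Sum>j1\<le>j. scY 0 j1 * d i (j - j1))"
    unfolding sc_mult_def by (subst sum_atMost_single[of 0]) (auto simp: scY_def)
  also have "\<dots> = (if j = 0 then 0 else d i (j - 1))"
    by (subst sum_atMost_two_terms) (auto simp: scY_def)
  finally show ?thesis .
qed

lemma sc_pow_scX: "sc_pow scX n i j = (if i = n \<and> j = 0 then 1 else 0)"
  by (induction n arbitrary: i j) (auto simp: sc_one_def sc_mult_scX)

lemma sc_pow_scY: "sc_pow scY n i j = (if i = 0 \<and> j = n then 1 else 0)"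
  by (induction n arbitrary: i j) (auto simp: sc_one_def sc_mult_scY)

section \<open>Geometric series\<close>

lemma sc_pow_eq_0_below_order:
  assumes "Z 0 0 = 0" and "i + j < n"
  shows "sc_pow Z n i j = 0"
  using assms(2)
proof (induction n arbitrary: i j)
  case 0
  then show ?case
    by simp
next
  case (Suc n)
  have "Z i1 j1 * sc_pow Z n (i - i1) (j - j1) = 0" if "i1 \<le> i" "j1 \<le> j" for i1 j1
  proof (cases "i1 = 0 \<and> j1 = 0")
    case True
    then show ?thesis
      using assms(1) by simp
  next
    case False
    then show ?thesis
      using Suc that by auto
  qed
  then show ?case
    by (auto intro!: sum.neutral simp: sc_mult_def)
qed

lemma geom_apply:
  assumes "Z 0 0 = 0"
  shows "geom Z i j w = (if w = replicate (length w) La then sc_pow Z (length w) i j else 0)"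
proof (cases "w = replicate (length w) La")
  case True
  have "geom Z i j w = (\<Sum>n\<le>i+j. if n = length w then sc_pow Z n i j else 0)"
    unfolding geom_def by (rule sum.cong) (use True in \<open>auto simp: word_apply\<close>)
  also have "\<dots> = sc_pow Z (length w) i j"
    using sc_pow_eq_0_below_order[where Z=Z, OF assms, of i j "length w"] by (auto simp: sum.delta)
  finally show ?thesis
    using True by simp
next
  case False
  then show ?thesis
    unfolding geom_def by (auto intro!: sum.neutral simp: word_apply)
qed

lemma geom_scX: "geom scX i j = (if j = 0 then word (replicate i La) else nc_zero)"
proof
  fix w
  show "geom scX i j w = (if j = 0 then word (replicate i La) else nc_zero) w"
    using geom_apply[where Z=scX] by (auto simp: sc_pow_scX word_apply scX_def[THEN fun_cong, THEN fun_cong])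
qed

lemma geom_scY: "geom scY i j = (if i = 0 then word (replicate j La) else nc_zero)"
proof
  fix w
  show "geom scY i j w = (if i = 0 then word (replicate j La) else nc_zero) w"
    using geom_apply[where Z=scY] by (auto simp: sc_pow_scY word_apply scY_def[THEN fun_cong, THEN fun_cong])
qed

lemma geom_rec:
  assumes "Z 0 0 = 0"
  shows "geom Z i j =
    nc_add (if i = 0 \<and> j = 0 then word [] else nc_zero) (nc_mult (ser_smul Z (geom Z) i j) (word [La]))"
proof
  fix w
  show "geom Z i j w =
    nc_add (if i = 0 \<and> j = 0 then word [] else nc_zero) (nc_mult (ser_smul Z (geom Z) i j) (word [La])) w"
  proof (cases w rule: rev_cases)
    case Nil
    then show ?thesis
      by (simp add: geom_apply[where Z=Z, OF assms] nc_add_def sc_one_def word_apply)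
  next
    case (snoc p y)
    have "ser_smul Z (geom Z) i' j' p =
        (if p = replicate (length p) La then sc_pow Z (Suc (length p)) i' j' else 0)" for i' j'
      by (simp add: ser_smul_def sc_mult_def geom_apply[where Z=Z, OF assms])
    moreover have "p @ [y] = replicate (Suc (length p)) La \<longleftrightarrow> y = La \<and> p = replicate (length p) La"
      by (metis append1_eq_conv replicate_Suc replicate_append_same)
    ultimately show ?thesis
      by (simp add: snoc geom_apply[where Z=Z, OF assms] nc_add_def word_apply del: replicate.simps)
  qed
qed

section \<open>Series determined by a recursion in \<open>a\<close>\<close>

lemma ser_smul_cong_below:
  assumes "\<And>i' j'. i' + j' < i + j \<Longrightarrow> F i' j' = G i' j'" and "Z 0 0 = 0"
  shows "ser_smul Z F i j = ser_smul Z G i j"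
  unfolding ser_smul_def
proof (intro ext sum.cong refl)
  fix w i1 j1
  assume "i1 \<in> {..i}" "j1 \<in> {..j}"
  then show "Z i1 j1 * F (i - i1) (j - j1) w = Z i1 j1 * G (i - i1) (j - j1) w"
    using assms by (cases "i1 = 0 \<and> j1 = 0") auto
qed

lemma ser_rec_unique:
  assumes "Z 0 0 = 0"
    and F: "\<And>i j. F i j = nc_add (D i j) (nc_mult (ser_smul Z F i j) (word [La]))"
    and G: "\<And>i j. G i j = nc_add (D i j) (nc_mult (ser_smul Z G i j) (word [La]))"
  shows "F = G"
proof -
  have "\<forall>i j. i + j < N \<longrightarrow> F i j = G i j" for N
  proof (induction N)
    case 0
    then show ?case
      by simp
  next
    case (Suc N)
    show ?case
    proof (intro allI impI)
      fix i j
      assume "i + j < Suc N"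
      then have "ser_smul Z F i j = ser_smul Z G i j"
        using Suc.IH assms(1) by (intro ser_smul_cong_below) auto
      then show "F i j = G i j"
        by (subst F, subst G) simp
    qed
  qed
  then show ?thesis
    by (metis ext lessI)
qed

lemma ser_mult_nc_add_right:
  "ser_mult C (\<lambda>i j. nc_add (F i j) (G i j)) i j = nc_add (ser_mult C F i j) (ser_mult C G i j)"
  by (simp add: ser_mult_def nc_mult_add_right) (simp add: nc_add_def sum.distrib)

lemma ser_mult_nc_smul_right:
  "ser_mult C (\<lambda>i j. nc_smul c (F i j)) i j = nc_smul c (ser_mult C F i j)"
  by (simp add: ser_mult_def nc_mult_smul_right) (simp add: nc_smul_def sum_distrib_left)

lemma ser_mult_mult_letter_right:
  "ser_mult C (\<lambda>i j. nc_mult (F i j) (word [x])) i j = nc_mult (ser_mult C F i j) (word [x])"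
proof
  fix w
  show "ser_mult C (\<lambda>i j. nc_mult (F i j) (word [x])) i j w = nc_mult (ser_mult C F i j) (word [x]) w"
    by (cases w rule: rev_cases) (auto simp: ser_mult_def nc_mult_assoc_letter)
qed

lemma ser_mult_shift_X: "ser_mult C (shift_X F) = shift_X (ser_mult C F)"
proof (intro ext)
  fix i j w
  show "ser_mult C (shift_X F) i j w = shift_X (ser_mult C F) i j w"
  proof (cases i)
    case 0
    then show ?thesis
      by (simp add: ser_mult_def shift_X_def)
  next
    case (Suc i')
    have "ser_mult C (shift_X F) i j w
        = (\<Sum>i1\<le>i'. \<Sum>j1\<le>j. nc_mult (C i1 j1) (shift_X F (Suc i' - i1) (j - j1)) w)"
      by (simp add: ser_mult_def Suc shift_X_def)
    also have "\<dots> = (\<Sum>i1\<le>i'. \<Sum>j1\<le>j. nc_mult (C i1 j1) (F (i' - i1) (j - j1)) w)"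
      by (intro sum.cong refl) (simp add: shift_X_def Suc_diff_le)
    finally show ?thesis
      by (simp add: Suc shift_X_def ser_mult_def)
  qed
qed

lemma ser_mult_shift_Y: "ser_mult C (shift_Y F) = shift_Y (ser_mult C F)"
proof (intro ext)
  fix i j w
  show "ser_mult C (shift_Y F) i j w = shift_Y (ser_mult C F) i j w"
  proof (cases j)
    case 0
    then show ?thesis
      by (simp add: ser_mult_def shift_Y_def)
  next
    case (Suc j')
    have "ser_mult C (shift_Y F) i j w
        = (\<Sum>i1\<le>i. \<Sum>j1\<le>j'. nc_mult (C i1 j1) (shift_Y F (i - i1) (Suc j' - j1)) w)"
      by (simp add: ser_mult_def Suc shift_Y_def)
    also have "\<dots> = (\<Sum>i1\<le>i. \<Sum>j1\<le>j'. nc_mult (C i1 j1) (F (i - i1) (j' - j1)) w)"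
      by (intro sum.cong refl) (simp add: shift_Y_def Suc_diff_le)
    finally show ?thesis
      by (simp add: Suc shift_Y_def ser_mult_def)
  qed
qed

lemma ser_mult_smul_scXYh: "ser_mult C (ser_smul scXYh F) i j = ser_smul scXYh (ser_mult C F) i j"
proof -
  have "ser_smul scXYh F =
      (\<lambda>i j. nc_add (nc_add (shift_X F i j) (shift_Y F i j)) (nc_smul hbar (shift_X (shift_Y F) i j)))"
    by (intro ext) (simp only: ser_smul_scXYh)
  then show ?thesis
    by (simp add: ser_mult_nc_add_right ser_mult_nc_smul_right ser_mult_shift_X ser_mult_shift_Y
        ser_smul_scXYh)
qed

lemma ser_mult_g1_geom_scXYh_rec:
  defines "E \<equiv> ser_mult (ser_const g1) (geom scXYh)"
  shows "ser_mult C E i j =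
    nc_add (nc_mult (C i j) g1) (nc_mult (ser_smul scXYh (ser_mult C E) i j) (word [La]))"
proof -
  have Z0: "scXYh 0 0 = 0"
    by (simp add: scXYh_def)
  have "E i j = nc_add (ser_const g1 i j) (nc_mult (ser_smul scXYh E i j) (word [La]))" for i j
    unfolding E_def ser_mult_const_left ser_mult_smul_scXYh[symmetric]
    by (subst geom_rec[where Z=scXYh, OF Z0])
      (simp add: nc_mult_add_right nc_mult_assoc_letter ser_mult_const_left ser_const_def)
  then have "E = (\<lambda>i j. nc_add (ser_const g1 i j) (nc_mult (ser_smul scXYh E i j) (word [La])))"
    by (intro ext) simp
  then have "ser_mult C E i j =
      ser_mult C (\<lambda>i j. nc_add (ser_const g1 i j) (nc_mult (ser_smul scXYh E i j) (word [La]))) i j"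
    by metis
  then show ?thesis
    by (simp add: ser_mult_nc_add_right ser_mult_const_right ser_mult_mult_letter_right
        ser_mult_smul_scXYh)
qed

section \<open>The shuffle recursion for \<open>u b a\<^sup>i sh v b a\<^sup>j\<close>\<close>

definition ba_pow :: "nc \<Rightarrow> nat \<Rightarrow> nc" where
  "ba_pow f n = nc_mult f (word (Lb # replicate n La))"

lemma ba_pow_0: "ba_pow f 0 = nc_mult f (word [Lb])"
  by (simp add: ba_pow_def)

lemma ba_pow_Suc: "ba_pow f (Suc n) = nc_mult (ba_pow f n) (word [La])"
  by (simp add: ba_pow_def nc_mult_word_append replicate_append_same)

lemma ser_mult_g1_geom_scX:
  "ser_mult (ser_const (nc_mult u g1)) (geom scX) = (\<lambda>i j. if j = 0 then ba_pow u (Suc i) else nc_zero)"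
  by (intro ext) (simp add: ser_mult_const_left geom_scX g1_def nc_mult_word_append ba_pow_def)

lemma ser_mult_g1_geom_scY:
  "ser_mult (ser_const (nc_mult v g1)) (geom scY) = (\<lambda>i j. if i = 0 then ba_pow v (Suc j) else nc_zero)"
  by (intro ext) (simp add: ser_mult_const_left geom_scY g1_def nc_mult_word_append ba_pow_def)

definition sh_brace :: "nc \<Rightarrow> nc \<Rightarrow> ser" where
  "sh_brace u v =
     ser_add
       (ser_add
         (ser_smul sc_1hX (ser_sh (ser_mult (ser_const (nc_mult u g1)) (geom scX)) (ser_const v)))
         (ser_smul sc_1hY (ser_sh (ser_const u) (ser_mult (ser_const (nc_mult v g1)) (geom scY)))))
       (ser_const (nc_mult (sh u v) (nc_diff e1 g1)))"

lemma sh_brace_apply: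
  fixes u v :: nc
  defines "P \<equiv> \<lambda>i j. if j = 0 then sh (ba_pow u (Suc i)) v else nc_zero"
    and "Q \<equiv> \<lambda>i j. if i = 0 then sh u (ba_pow v (Suc j)) else nc_zero"
  shows "sh_brace u v i j =
    nc_add (nc_add (nc_add (P i j) (nc_smul hbar (shift_X P i j)))
                   (nc_add (Q i j) (nc_smul hbar (shift_Y Q i j))))
      (if i = 0 \<and> j = 0 then nc_smul hbar (nc_mult (sh u v) (word [Lb])) else nc_zero)"
proof -
  have "ser_sh (ser_mult (ser_const (nc_mult u g1)) (geom scX)) (ser_const v) = P"
    by (intro ext) (simp add: P_def ser_sh_const_right ser_mult_g1_geom_scX)
  moreover have "ser_sh (ser_const u) (ser_mult (ser_const (nc_mult v g1)) (geom scY)) = Q"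
    by (intro ext) (simp add: Q_def ser_sh_const_left ser_mult_g1_geom_scY)
  ultimately show ?thesis
    by (simp add: sh_brace_def ser_add_def ser_const_def ser_smul_sc_1hX ser_smul_sc_1hY
        nc_diff_e1_g1 nc_mult_smul_right)
qed

lemma sh_ba_pow_split:
  fixes u v :: nc
  defines "L \<equiv> \<lambda>i j. sh (ba_pow u (Suc i)) (ba_pow v (Suc j))"
  shows "nc_add (nc_add (sh (ba_pow u (Suc i)) (ba_pow v j)) (sh (ba_pow u i) (ba_pow v (Suc j))))
           (nc_smul hbar (sh (ba_pow u i) (ba_pow v j)))
       = nc_add (nc_mult (sh_brace u v i j) (word [Lb])) (ser_smul scXYh L i j)"
proof -
  have b_right: "sh (ba_pow u (Suc n)) (ba_pow v 0) = nc_mult (sh (ba_pow u (Suc n)) v) (word [Lb])" for n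
    by (simp add: ba_pow_0 sh_mult_Lb_right)
  have b_left: "sh (ba_pow u 0) (ba_pow v (Suc m)) = nc_mult (sh u (ba_pow v (Suc m))) (word [Lb])" for m
    by (simp add: ba_pow_0 sh_mult_Lb_left)
  have b_both: "sh (ba_pow u 0) (ba_pow v 0) = nc_mult (nc_mult (sh u v) (word [Lb])) (word [Lb])"
    by (simp add: ba_pow_0 sh_mult_Lb_left sh_mult_Lb_right)
  show ?thesis
    by (cases i; cases j)
      (simp_all add: sh_brace_apply ser_smul_scXYh shift_X_def shift_Y_def L_def b_right b_left b_both
        nc_mult_add_left nc_mult_smul_left,
       simp_all add: fun_eq_iff nc_add_def nc_smul_def algebra_simps)
qed

lemma sh_ba_pow_rec:
  fixes u v :: nc
  defines "L \<equiv> \<lambda>i j. sh (ba_pow u (Suc i)) (ba_pow v (Suc j))"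
  shows "L i j = nc_add (nc_mult (sh_brace u v i j) g1) (nc_mult (ser_smul scXYh L i j) (word [La]))"
proof -
  have "L i j =
      nc_mult (nc_add (nc_add (sh (ba_pow u (Suc i)) (ba_pow v j)) (sh (ba_pow u i) (ba_pow v (Suc j))))
        (nc_smul hbar (sh (ba_pow u i) (ba_pow v j)))) (word [La])"
    unfolding L_def ba_pow_Suc[of u i] ba_pow_Suc[of v j] by (rule sh_mult_La_La)
  also have "\<dots> = nc_mult (nc_add (nc_mult (sh_brace u v i j) (word [Lb])) (ser_smul scXYh L i j)) (word [La])"
    unfolding L_def sh_ba_pow_split ..
  finally show ?thesis
    by (simp add: nc_mult_add_left g1_def nc_mult_word_append)
qed

theorem lemma3p10:
  fixes u v :: nc
  assumes "nc_fin u" and "nc_fin v"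
  shows "ser_sh (ser_mult (ser_const (nc_mult u g1)) (geom scX))
                (ser_mult (ser_const (nc_mult v g1)) (geom scY))
       = ser_mult
           (ser_add
             (ser_add
               (ser_smul sc_1hX (ser_sh (ser_mult (ser_const (nc_mult u g1)) (geom scX)) (ser_const v)))
               (ser_smul sc_1hY (ser_sh (ser_const u) (ser_mult (ser_const (nc_mult v g1)) (geom scY)))))
             (ser_const (nc_mult (sh u v) (nc_diff e1 g1))))
           (ser_mult (ser_const g1) (geom scXYh))"
proof -
  define L where "L = (\<lambda>i j. sh (ba_pow u (Suc i)) (ba_pow v (Suc j)))"
  have "ser_sh (ser_mult (ser_const (nc_mult u g1)) (geom scX))
               (ser_mult (ser_const (nc_mult v g1)) (geom scY)) = L"
    unfolding ser_mult_g1_geom_scX ser_mult_g1_geom_scY L_def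
    by (intro ext) (simp only: ser_sh_X_Y_separated)
  also have "L = ser_mult (sh_brace u v) (ser_mult (ser_const g1) (geom scXYh))"
  proof (rule ser_rec_unique[OF _ _ ser_mult_g1_geom_scXYh_rec])
    show "scXYh 0 0 = 0"
      by (simp add: scXYh_def)
    show "L i j = nc_add (nc_mult (sh_brace u v i j) g1) (nc_mult (ser_smul scXYh L i j) (word [La]))"
      for i j
      unfolding L_def by (rule sh_ba_pow_rec)
  qed
  finally show ?thesis
    unfolding sh_brace_def .
qed

end
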